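(* Let $R:[0,\infty)^2\to\mathbb{R}$ be any one of the following functions (with the stated parameter ranges), and let $\{G_t,t\ge 0\}$ be a one-dimensional centered Gaussian process with covariance $\mathbb{E}(G_sG_t)=R(s,t)$: \begin{enumerate} \item $R(t,s)=\frac{\Gamma(1-K)}{K(2-K)}\left[t^{2HK}+s^{2HK}-(t^{2H}+s^{2H})^{K}\right]$ if $K\in(0,1)$, and $R(t,s)=\frac{\Gamma(2-K)}{K(K-1)}\left[(t^{2H}+s^{2H})^{K}-t^{2HK}-s^{2HK}\right]$ if $K\in(1,2)$, where $H\in(0,1)$ and $HK\in(0,1)$; \item $R(s,t)=\frac12\left(s^{2H}+t^{2H}-|t-s|^{2H}\right)$, $H\in(0,1)$; \item $R(s,t)=(t+s)^{2H}-|t-s|^{2H}$, $H\in(0,1)$; \item $R(t,s)=s^{2H}+t^{2H}-\frac12\left((s+t)^{2H}+|t-s|^{2H}\right)$, $H\in(0,1)$; \item $R(s,t)=(s+t)^{2H}-(\max(s,t))^{2H}$, $H\in(0,\frac12)$; \item $R(s,t)=(\max(s,t))^{2H}-|t-s|^{2H}$, $H\in(0,\frac12)$; \item $R(t,s)=\frac12\left[t^{2H}+s^{2H}-K(t+s)^{2H}-(1-K)|t-s|^{2H}\right]$, $H\in(0,\frac12)$, $K\in(0,1)$; \item $R(t,s)=\frac{1}{2^K}\left((s^{2H}+t^{2H})^K-|t-s|^{2HK}\right)$, where either $H\in(0,1)$, $K\in(0,1)$, $HK\in(0,1)$, or $H\in(0,1)$, $K\in(1,2)$, $HK\in(0,1)$;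 \item $R(t,s)=(s^{2H}+t^{2H})^{K}-\frac12\left[(t+s)^{2HK}+|t-s|^{2HK}\right]$, where either $H\in(0,1)$, $K\in(1,2)$, $HK\in(0,1)$, or $H\in(0,\frac12)$, $K\in(0,1)$. \end{enumerate} Then $G$ satisfies both of the following: (i) there exist constants $c>0$ and $\beta<2$ such that $\mathbb{E}(G_t^2)\le c\,t^{\beta}$ for all $t\ge 0$; (ii) for every $n\ge1$ and all times $0<t_1<t_2<\cdots<t_n$, the covariance matrix $\mathbf{V}=(R(t_i,t_j))_{i,j=1}^n$ is strictly positive definite.
   Context: $\Gamma$ denotes the Euler Gamma function. A symmetric matrix $\mathbf V$ is strictly positive definite if $\mathbf a'\mathbf V\mathbf a>0$ for every nonzero $\mathbf a\in\mathbb{R}^n$. *)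

theory Defs
  imports "HOL-Probability.Probability"
begin

definition gaussian_rv :: "'a measure \<Rightarrow> ('a \<Rightarrow> real) \<Rightarrow> bool" where
  "gaussian_rv M X \<longleftrightarrow> X \<in> borel_measurable M \<and>
     ((\<exists>\<mu> \<sigma>. \<sigma> > 0 \<and> distributed M lborel X (normal_density \<mu> \<sigma>)) \<or>
      (\<exists>c. AE \<omega> in M. X \<omega> = c))"

definition gaussian_process :: "'a measure \<Rightarrow> (real \<Rightarrow> 'a \<Rightarrow> real) \<Rightarrow> bool" where
  "gaussian_process M G \<longleftrightarrow>
     (\<forall>t. t \<ge> 0 \<longrightarrow> G t \<in> borel_measurable M) \<and>
     (\<forall>(n::nat) (ts::nat \<Rightarrow> real) (a::nat \<Rightarrow> real). (\<forall>i<n. ts i \<ge> 0) \<longrightarrow>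
        gaussian_rv M (\<lambda>\<omega>. \<Sum>i<n. a i * G (ts i) \<omega>))"

definition cov1 :: "real \<Rightarrow> real \<Rightarrow> real \<Rightarrow> real \<Rightarrow> real" where
  "cov1 H K t s =
     (if K < 1 then Gamma (1 - K) / (K * (2 - K)) *
        (t powr (2*H*K) + s powr (2*H*K) - (t powr (2*H) + s powr (2*H)) powr K)
      else Gamma (2 - K) / (K * (K - 1)) *
        ((t powr (2*H) + s powr (2*H)) powr K - t powr (2*H*K) - s powr (2*H*K)))"

definition cov2 :: "real \<Rightarrow> real \<Rightarrow> real \<Rightarrow> real" where
  "cov2 H s t = (s powr (2*H) + t powr (2*H) - \<bar>t - s\<bar> powr (2*H)) / 2"

definition cov3 :: "real \<Rightarrow> real \<Rightarrow> real \<Rightarrow> real" where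
  "cov3 H s t = (t + s) powr (2*H) - \<bar>t - s\<bar> powr (2*H)"

definition cov4 :: "real \<Rightarrow> real \<Rightarrow> real \<Rightarrow> real" where
  "cov4 H t s = s powr (2*H) + t powr (2*H) - ((s + t) powr (2*H) + \<bar>t - s\<bar> powr (2*H)) / 2"

definition cov5 :: "real \<Rightarrow> real \<Rightarrow> real \<Rightarrow> real" where
  "cov5 H s t = (s + t) powr (2*H) - (max s t) powr (2*H)"

definition cov6 :: "real \<Rightarrow> real \<Rightarrow> real \<Rightarrow> real" where
  "cov6 H s t = (max s t) powr (2*H) - \<bar>t - s\<bar> powr (2*H)"

definition cov7 :: "real \<Rightarrow> real \<Rightarrow> real \<Rightarrow> real \<Rightarrow> real" where
  "cov7 H K t s = (t powr (2*H) + s powr (2*H) - K * (t + s) powr (2*H)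
                    - (1 - K) * \<bar>t - s\<bar> powr (2*H)) / 2"

definition cov8 :: "real \<Rightarrow> real \<Rightarrow> real \<Rightarrow> real \<Rightarrow> real" where
  "cov8 H K t s = ((s powr (2*H) + t powr (2*H)) powr K - \<bar>t - s\<bar> powr (2*H*K)) / 2 powr K"

definition cov9 :: "real \<Rightarrow> real \<Rightarrow> real \<Rightarrow> real \<Rightarrow> real" where
  "cov9 H K t s = (s powr (2*H) + t powr (2*H)) powr K
                   - ((t + s) powr (2*H*K) + \<bar>t - s\<bar> powr (2*H*K)) / 2"

end

theory Submission
  imports Defs "HOL-Real_Asymp.Real_Asymp"
begin

text \<open>
  Every kernel is self-similar on the diagonal, \<open>R(t,t) = R(1,1) t\<^sup>\<beta>\<close> with \<open>\<beta> < 2\<close>,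
  which gives (i). For (ii), \<open>a'Va\<close> is the variance of \<open>\<Sum> a\<^sub>i G(t\<^sub>i)\<close>; if it vanishes,
  that combination is zero almost surely, so \<open>\<Sum> a\<^sub>j R(s,t\<^sub>j) = 0\<close> for all \<open>s \<ge> 0\<close>.
  Hence it suffices that the sections \<open>R(\<cdot>,t)\<close>, \<open>t > 0\<close>, are linearly independent; only
  the covariance of \<open>G\<close> is used, not its Gaussianity or centering.
  For kernels 2--9, \<open>R(\<cdot>,u)\<close> has second differences \<open>O(h\<^sup>2)\<close> at every \<open>t \<noteq> u\<close>,
  while \<open>R(\<cdot>,t)\<close> is singular at \<open>t\<close> (a term \<open>|s - t|\<^sup>\<gamma>\<close> with \<open>\<gamma> < 2\<close>, or the kink of
  \<open>max(s,t)\<^sup>\<gamma>\<close>), so no section can be a combination of the others.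
  For kernel 1, the substitution \<open>x = s\<^sup>2\<^sup>H\<close> turns the sections into shifted powers
  \<open>(x + t\<^sup>2\<^sup>H)\<^sup>K\<close> with \<open>K\<close> not an integer; repeated differentiation reduces their
  independence to a Vandermonde system.
\<close>

lemma not_in_Nats_between:
  fixes x :: "'a :: linordered_semidom"
  assumes "of_nat m < x" "x < of_nat (Suc m)"
  shows "x \<notin> \<nat>"
  using assms by (auto elim!: Nats_cases simp del: of_nat_Suc)

lemma strict_mono_on_lessThanI:
  fixes f :: "nat \<Rightarrow> 'a :: order"
  assumes "\<And>i. Suc i < n \<Longrightarrow> f i < f (Suc i)"
  shows "strict_mono_on {..<n} f"
proof (rule strict_mono_onI)
  fix i j :: nat
  assume "i \<in> {..<n}" "j \<in> {..<n}" "i < j"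
  then show "f i < f j"
  proof (induction j)
    case 0
    then show ?case by simp
  next
    case (Suc j)
    then show ?case
      using assms[of j] by (cases "i = j") (auto intro: order.strict_trans)
  qed
qed

section \<open>Second differences\<close>

definition second_diff_bigo :: "(real \<Rightarrow> real) \<Rightarrow> real \<Rightarrow> bool" where
  "second_diff_bigo f t \<longleftrightarrow> (\<lambda>h. f (t + h) + f (t - h) - 2 * f t) \<in> O[at_right 0](\<lambda>h. h\<^sup>2)"

lemma second_diff_bigo_const: "second_diff_bigo (\<lambda>s. c) t"
  by (simp add: second_diff_bigo_def)

lemma second_diff_bigo_add:
  "second_diff_bigo f t \<Longrightarrow> second_diff_bigo g t \<Longrightarrow> second_diff_bigo (\<lambda>s. f s + g s) t"
  unfolding second_diff_bigo_def by (drule (1) sum_in_bigo(1)) (simp add: algebra_simps)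

lemma second_diff_bigo_diff:
  "second_diff_bigo f t \<Longrightarrow> second_diff_bigo g t \<Longrightarrow> second_diff_bigo (\<lambda>s. f s - g s) t"
  unfolding second_diff_bigo_def by (drule (1) sum_in_bigo(2)) (simp add: algebra_simps)

lemma second_diff_bigo_cmult:
  assumes "second_diff_bigo f t" shows "second_diff_bigo (\<lambda>s. c * f s) t"
proof -
  have "(\<lambda>h. c * f (t + h) + c * f (t - h) - 2 * (c * f t))
      = (\<lambda>h. c * (f (t + h) + f (t - h) - 2 * f t))"
    by (simp add: algebra_simps)
  with assms show ?thesis by (simp add: second_diff_bigo_def)
qed

lemma second_diff_bigo_divide: "second_diff_bigo f t \<Longrightarrow> second_diff_bigo (\<lambda>s. f s / c) t"
  using second_diff_bigo_cmult[of f t "1 / c"] by simp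

lemma second_diff_bigo_sum:
  "(\<And>i. i \<in> A \<Longrightarrow> second_diff_bigo (f i) t) \<Longrightarrow> second_diff_bigo (\<lambda>s. \<Sum>i\<in>A. f i s) t"
  unfolding second_diff_bigo_def
  by (drule big_sum_in_bigo) (simp add: sum.distrib sum_subtractf sum_distrib_left)

lemma second_diff_bigo_powr: "0 < t \<Longrightarrow> second_diff_bigo (\<lambda>s. s powr a) t"
  unfolding second_diff_bigo_def by real_asymp

lemma second_diff_bigo_add_powr: "0 < t + c \<Longrightarrow> second_diff_bigo (\<lambda>s. (s + c) powr a) t"
  unfolding second_diff_bigo_def by real_asymp

lemma second_diff_bigo_add_powr': "0 < c + t \<Longrightarrow> second_diff_bigo (\<lambda>s. (c + s) powr a) t"
  unfolding second_diff_bigo_def by real_asymp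

lemma second_diff_bigo_abs_powr: "t \<noteq> c \<Longrightarrow> second_diff_bigo (\<lambda>s. \<bar>s - c\<bar> powr a) t"
  unfolding second_diff_bigo_def by (cases "t < c") real_asymp+

lemma second_diff_bigo_abs_powr': "t \<noteq> c \<Longrightarrow> second_diff_bigo (\<lambda>s. \<bar>c - s\<bar> powr a) t"
  using second_diff_bigo_abs_powr[of t c a] by (simp add: abs_minus_commute)

lemma second_diff_bigo_max_powr:
  assumes "0 < t" "t \<noteq> c" shows "second_diff_bigo (\<lambda>s. max s c powr a) t"
proof (cases "t < c")
  case True
  then have "0 < c - t" by simp
  have ev: "\<forall>\<^sub>F h in at_right 0. max (t + h) c powr a + max (t - h) c powr a - 2 * max t c powr a = 0"
    using eventually_at_right_real[OF \<open>0 < c - t\<close>] by eventually_elim auto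
  show ?thesis
    unfolding second_diff_bigo_def by (subst landau_o.big.in_cong[OF ev]) simp
next
  case False
  then show ?thesis using assms unfolding second_diff_bigo_def by real_asymp
qed

lemma second_diff_bigo_powr_add_powr:
  "0 < t \<Longrightarrow> 0 < t powr b + c \<Longrightarrow> second_diff_bigo (\<lambda>s. (s powr b + c) powr K) t"
  unfolding second_diff_bigo_def by real_asymp

lemma second_diff_bigo_powr_add_powr':
  "0 < t \<Longrightarrow> 0 < c + t powr b \<Longrightarrow> second_diff_bigo (\<lambda>s. (c + s powr b) powr K) t"
  using second_diff_bigo_powr_add_powr[of t b c K] by (simp add: add.commute)

lemma not_second_diff_bigo:
  assumes "(\<lambda>h. f (t + h) + f (t - h) - 2 * f t) \<in> \<Theta>[at_right 0](\<lambda>h. h powr \<gamma>)" "\<gamma> < 2"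
  shows "\<not> second_diff_bigo f t"
proof
  assume "second_diff_bigo f t"
  with assms(1) have "(\<lambda>h. h powr \<gamma>) \<in> O[at_right 0](\<lambda>h. h\<^sup>2)"
    unfolding second_diff_bigo_def by (metis bigthetaD1 bigtheta_sym landau_o.big_trans)
  moreover have "(\<lambda>h. h\<^sup>2) \<in> o[at_right 0](\<lambda>h. h powr \<gamma>)"
    using assms(2) by real_asymp
  ultimately have "\<forall>\<^sub>F h in at_right 0. h powr \<gamma> = 0"
    by (rule landau_o.big_small_asymmetric)
  moreover have "\<forall>\<^sub>F h in at_right 0. h powr \<gamma> \<noteq> (0::real)"
    using eventually_at_right_less[of 0] by eventually_elim simp
  ultimately have "\<forall>\<^sub>F h::real in at_right 0. False"
    by eventually_elim simp
  then show False by simp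
qed

lemma not_second_diff_bigo_cmult:
  assumes "\<not> second_diff_bigo f t" "c \<noteq> 0"
  shows "\<not> second_diff_bigo (\<lambda>s. c * f s) t"
  using second_diff_bigo_divide[of "\<lambda>s. c * f s" t c] assms by auto

lemma not_second_diff_bigo_divide:
  "\<not> second_diff_bigo f t \<Longrightarrow> c \<noteq> 0 \<Longrightarrow> \<not> second_diff_bigo (\<lambda>s. f s / c) t"
  using not_second_diff_bigo_cmult[of f t "1 / c"] by simp

lemma not_second_diff_bigo_add:
  assumes "second_diff_bigo f t" "\<not> second_diff_bigo g t"
  shows "\<not> second_diff_bigo (\<lambda>s. f s + g s) t"
  using second_diff_bigo_diff[of "\<lambda>s. f s + g s" t f] assms by auto

lemma not_second_diff_bigo_diff:
  assumes "second_diff_bigo f t" "\<not> second_diff_bigo g t"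
  shows "\<not> second_diff_bigo (\<lambda>s. f s - g s) t"
  using second_diff_bigo_diff[of f t "\<lambda>s. f s - g s"] assms by auto

lemma not_second_diff_bigo_abs_powr:
  assumes "\<gamma> < 2" shows "\<not> second_diff_bigo (\<lambda>s. \<bar>s - t\<bar> powr \<gamma>) t"
proof (rule not_second_diff_bigo[OF _ assms])
  have ev: "\<forall>\<^sub>F h in at_right 0. \<bar>t + h - t\<bar> powr \<gamma> + \<bar>t - h - t\<bar> powr \<gamma> - 2 * \<bar>t - t\<bar> powr \<gamma>
          = 2 * h powr \<gamma>"
    using eventually_at_right_less[of 0] by eventually_elim auto
  show "(\<lambda>h. \<bar>t + h - t\<bar> powr \<gamma> + \<bar>t - h - t\<bar> powr \<gamma> - 2 * \<bar>t - t\<bar> powr \<gamma>)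
      \<in> \<Theta>[at_right 0](\<lambda>h. h powr \<gamma>)"
    by (subst landau_theta.in_cong[OF ev]) simp
qed

lemma not_second_diff_bigo_abs_powr':
  "\<gamma> < 2 \<Longrightarrow> \<not> second_diff_bigo (\<lambda>s. \<bar>t - s\<bar> powr \<gamma>) t"
  using not_second_diff_bigo_abs_powr[of \<gamma> t] by (simp add: abs_minus_commute)

lemma not_second_diff_bigo_max_powr:
  assumes "0 < t" "a \<noteq> 0"
  shows "\<not> second_diff_bigo (\<lambda>s. max s t powr a) t"
proof (rule not_second_diff_bigo[where \<gamma> = 1])
  have ev: "\<forall>\<^sub>F h in at_right 0. max (t + h) t powr a + max (t - h) t powr a - 2 * max t t powr a
          = (t + h) powr a - t powr a"
    using eventually_at_right_less[of 0] by eventually_elim auto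
  have "(\<lambda>h. (t + h) powr a - t powr a) \<in> \<Theta>[at_right 0](\<lambda>h. h powr 1)"
    using assms by real_asymp
  then show "(\<lambda>h. max (t + h) t powr a + max (t - h) t powr a - 2 * max t t powr a)
      \<in> \<Theta>[at_right 0](\<lambda>h. h powr 1)"
    by (subst landau_theta.in_cong[OF ev])
qed simp

lemma not_second_diff_bigo_max_powr_diff_abs_powr:
  assumes "0 < t" "0 < a" "a < 1"
  shows "\<not> second_diff_bigo (\<lambda>s. max s t powr a - \<bar>t - s\<bar> powr a) t"
proof (rule not_second_diff_bigo[where \<gamma> = a])
  have ev: "\<forall>\<^sub>F h in at_right 0. (max (t + h) t powr a - \<bar>t - (t + h)\<bar> powr a)
          + (max (t - h) t powr a - \<bar>t - (t - h)\<bar> powr a) - 2 * (max t t powr a - \<bar>t - t\<bar> powr a)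
          = (t + h) powr a - t powr a - 2 * h powr a"
    using eventually_at_right_less[of 0] by eventually_elim auto
  have "(\<lambda>h. (t + h) powr a - t powr a - 2 * h powr a) \<in> \<Theta>[at_right 0](\<lambda>h. h powr a)"
    using assms by real_asymp
  then show "(\<lambda>h. (max (t + h) t powr a - \<bar>t - (t + h)\<bar> powr a)
          + (max (t - h) t powr a - \<bar>t - (t - h)\<bar> powr a) - 2 * (max t t powr a - \<bar>t - t\<bar> powr a))
      \<in> \<Theta>[at_right 0](\<lambda>h. h powr a)"
    by (subst landau_theta.in_cong[OF ev])
qed (use assms in simp)

lemmas second_diff_bigo_intros =
  second_diff_bigo_const second_diff_bigo_add second_diff_bigo_diff second_diff_bigo_cmult
  second_diff_bigo_divide second_diff_bigo_powr second_diff_bigo_add_powr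
  second_diff_bigo_add_powr' second_diff_bigo_abs_powr second_diff_bigo_abs_powr'
  second_diff_bigo_max_powr second_diff_bigo_powr_add_powr second_diff_bigo_powr_add_powr'

lemmas not_second_diff_bigo_intros =
  not_second_diff_bigo_cmult not_second_diff_bigo_divide not_second_diff_bigo_add
  not_second_diff_bigo_diff not_second_diff_bigo_abs_powr not_second_diff_bigo_abs_powr'
  not_second_diff_bigo_max_powr

section \<open>Linear independence of kernel sections\<close>

definition lin_indep_sections :: "(real \<Rightarrow> real \<Rightarrow> real) \<Rightarrow> bool" where
  "lin_indep_sections R \<longleftrightarrow> (\<forall>T a. finite T \<longrightarrow> T \<subseteq> {0<..} \<longrightarrow>
     (\<forall>s\<ge>0. (\<Sum>t\<in>T. a t * R s t) = 0) \<longrightarrow> (\<forall>t\<in>T. a t = 0))"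

lemma lin_indep_sections_if_singular_diagonal:
  assumes regular: "\<And>t u. 0 < t \<Longrightarrow> 0 < u \<Longrightarrow> u \<noteq> t \<Longrightarrow> second_diff_bigo (\<lambda>s. R s u) t"
    and singular: "\<And>t. 0 < t \<Longrightarrow> \<not> second_diff_bigo (\<lambda>s. R s t) t"
  shows "lin_indep_sections R"
  unfolding lin_indep_sections_def
proof (intro allI impI ballI)
  fix T a t
  assume T: "finite T" "T \<subseteq> {0<..}" and zero: "\<forall>s\<ge>0. (\<Sum>u\<in>T. a u * R s u) = 0" and "t \<in> T"
  then have "0 < t" by auto
  show "a t = 0"
  proof (rule ccontr)
    assume "a t \<noteq> 0"
    have ev: "\<forall>\<^sub>F h in at_right 0. (\<Sum>u\<in>T. a u * R (t + h) u) + (\<Sum>u\<in>T. a u * R (t - h) u)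
            - 2 * (\<Sum>u\<in>T. a u * R t u) = 0"
      using eventually_at_right_real[OF \<open>0 < t\<close>] by eventually_elim (use zero in auto)
    have total: "second_diff_bigo (\<lambda>s. \<Sum>u\<in>T. a u * R s u) t"
      unfolding second_diff_bigo_def by (subst landau_o.big.in_cong[OF ev]) simp
    have rest: "second_diff_bigo (\<lambda>s. \<Sum>u\<in>T - {t}. a u * R s u) t"
      using T \<open>0 < t\<close> by (intro second_diff_bigo_sum second_diff_bigo_cmult regular) auto
    have "(\<lambda>s. R s t) = (\<lambda>s. ((\<Sum>u\<in>T. a u * R s u) - (\<Sum>u\<in>T - {t}. a u * R s u)) / a t)"
      using \<open>a t \<noteq> 0\<close> T(1) \<open>t \<in> T\<close> by (simp add: sum.remove)
    with total rest have "second_diff_bigo (\<lambda>s. R s t) t"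
      by (simp only:) (intro second_diff_bigo_divide second_diff_bigo_diff)
    with singular \<open>0 < t\<close> show False by blast
  qed
qed

lemma lin_indep_sections_cov2: "H < 1 \<Longrightarrow> lin_indep_sections (cov2 H)"
  by (rule lin_indep_sections_if_singular_diagonal; unfold cov2_def;
      intro second_diff_bigo_intros not_second_diff_bigo_intros) (auto intro: add_pos_pos)

lemma lin_indep_sections_cov3: "H < 1 \<Longrightarrow> lin_indep_sections (cov3 H)"
  by (rule lin_indep_sections_if_singular_diagonal; unfold cov3_def;
      intro second_diff_bigo_intros not_second_diff_bigo_intros) (auto intro: add_pos_pos)

lemma lin_indep_sections_cov4: "H < 1 \<Longrightarrow> lin_indep_sections (cov4 H)"
  by (rule lin_indep_sections_if_singular_diagonal; unfold cov4_def;
      intro second_diff_bigo_intros not_second_diff_bigo_intros) (auto intro: add_pos_pos)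

lemma lin_indep_sections_cov5: "H \<noteq> 0 \<Longrightarrow> lin_indep_sections (cov5 H)"
  by (rule lin_indep_sections_if_singular_diagonal; unfold cov5_def;
      intro second_diff_bigo_intros not_second_diff_bigo_intros) (auto intro: add_pos_pos)

lemma lin_indep_sections_cov6: "0 < H \<Longrightarrow> H < 1/2 \<Longrightarrow> lin_indep_sections (cov6 H)"
  by (rule lin_indep_sections_if_singular_diagonal; unfold cov6_def;
      intro second_diff_bigo_intros not_second_diff_bigo_max_powr_diff_abs_powr) auto

lemma lin_indep_sections_cov7: "H < 1 \<Longrightarrow> K \<noteq> 1 \<Longrightarrow> lin_indep_sections (cov7 H K)"
  by (rule lin_indep_sections_if_singular_diagonal; unfold cov7_def;
      intro second_diff_bigo_intros not_second_diff_bigo_intros) (auto intro: add_pos_pos)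

lemma lin_indep_sections_cov8: "H * K < 1 \<Longrightarrow> lin_indep_sections (cov8 H K)"
  by (rule lin_indep_sections_if_singular_diagonal; unfold cov8_def;
      intro second_diff_bigo_intros not_second_diff_bigo_intros) (auto intro: add_pos_pos)

lemma lin_indep_sections_cov9: "H * K < 1 \<Longrightarrow> lin_indep_sections (cov9 H K)"
  by (rule lin_indep_sections_if_singular_diagonal; unfold cov9_def;
      intro second_diff_bigo_intros not_second_diff_bigo_intros) (auto intro: add_pos_pos)

lemma power_sums_eq_zero_imp_zero:
  fixes y z :: "'a \<Rightarrow> 'b :: idom"
  assumes "finite A" "inj_on y A" "\<And>k. (\<Sum>i\<in>A. z i * y i ^ k) = 0" "i \<in> A"
  shows "z i = 0"
  using assms
proof (induction A arbitrary: z i rule: finite_induct)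
  case empty
  then show ?case by simp
next
  case (insert j A)
  have "(\<Sum>i\<in>A. (z i * (y i - y j)) * y i ^ k) = 0" for k
  proof -
    have "(\<Sum>i\<in>A. (z i * (y i - y j)) * y i ^ k)
        = (\<Sum>i\<in>insert j A. z i * y i ^ Suc k) - y j * (\<Sum>i\<in>insert j A. z i * y i ^ k)"
      using insert.hyps by (simp add: sum_distrib_left sum_subtractf[symmetric] algebra_simps)
    also have "\<dots> = 0"
      using insert.prems(2)[of "Suc k"] insert.prems(2)[of k] by simp
    finally show ?thesis .
  qed
  moreover have "inj_on y A" "\<And>i. i \<in> A \<Longrightarrow> y i \<noteq> y j"
    using insert.prems(1) insert.hyps(2) by (auto simp: inj_on_def)
  ultimately have zA: "z i = 0" if "i \<in> A" for i
    using insert.IH[of "\<lambda>i. z i * (y i - y j)"] that by simp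
  then have "z j = 0"
    using insert.prems(2)[of 0] insert.hyps by simp
  with zA insert.prems(3) show ?case by auto
qed

lemma sum_shifted_powr_const_imp_deriv_zero:
  fixes d w :: "'a \<Rightarrow> real"
  assumes "finite A" "\<And>i. i \<in> A \<Longrightarrow> 0 \<le> d i" "a \<noteq> 0"
    and const: "\<And>x. 0 < x \<Longrightarrow> (\<Sum>i\<in>A. w i * (x + d i) powr a) = C"
    and "0 < x"
  shows "(\<Sum>i\<in>A. w i * (x + d i) powr (a - 1)) = 0"
proof -
  have "((\<lambda>x. \<Sum>i\<in>A. w i * (x + d i) powr a) has_real_derivative
          (\<Sum>i\<in>A. a * (x + d i) powr (a - 1) * w i)) (at x)"
    using assms(2) \<open>0 < x\<close> by (auto intro!: derivative_eq_intros add_pos_nonneg)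
  moreover have "((\<lambda>x. \<Sum>i\<in>A. w i * (x + d i) powr a) has_real_derivative 0) (at x)"
    by (rule has_field_derivative_transform_within_open[OF DERIV_const[of C] open_greaterThan[of 0]])
       (use const \<open>0 < x\<close> in auto)
  ultimately have "a * (\<Sum>i\<in>A. w i * (x + d i) powr (a - 1)) = 0"
    by (simp add: DERIV_unique sum_distrib_left mult_ac)
  with assms(3) show ?thesis by simp
qed

lemma sum_shifted_powr_const_imp_zero:
  fixes d w :: "'a \<Rightarrow> real" and K :: real
  assumes "finite A" "inj_on d A" "\<And>i. i \<in> A \<Longrightarrow> 0 \<le> d i" "K \<notin> \<nat>"
    and const: "\<And>x. 0 < x \<Longrightarrow> (\<Sum>i\<in>A. w i * (x + d i) powr K) = C"
    and "i \<in> A"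
  shows "w i = 0"
proof -
  have derivs: "(\<Sum>i\<in>A. w i * (x + d i) powr (K - real (Suc m))) = 0" if "0 < x" for m x
    using that
  proof (induction m arbitrary: x)
    case 0
    have "K \<noteq> 0" using \<open>K \<notin> \<nat>\<close> by auto
    with 0 show ?case
      using sum_shifted_powr_const_imp_deriv_zero[OF assms(1,3) _ const] by simp
  next
    case (Suc m)
    have "K - real (Suc m) \<noteq> 0" using \<open>K \<notin> \<nat>\<close> by (metis of_nat_in_Nats right_minus_eq)
    then have "(\<Sum>i\<in>A. w i * (x + d i) powr (K - real (Suc m) - 1)) = 0"
      using Suc assms(1,3) by (intro sum_shifted_powr_const_imp_deriv_zero[where C = 0]) auto
    then show ?case by (simp add: algebra_simps)
  qed
  \<comment> \<open>Evaluating all derivatives at 1 gives a Vandermonde system in the nodes 1/(1 + d i).\<close>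
  have "(\<Sum>i\<in>A. (w i * (1 + d i) powr (K - 1)) * (1 / (1 + d i)) ^ k) = 0" for k
  proof -
    have "(1 + d i) powr (K - 1) * (1 / (1 + d i)) ^ k = (1 + d i) powr (K - real (Suc k))"
      if "i \<in> A" for i
    proof -
      have "0 < 1 + d i" using assms(3)[OF that] by simp
      then have "(1 + d i) powr (K - real (Suc k)) = (1 + d i) powr (K - 1) / (1 + d i) ^ k"
        by (simp add: powr_diff[symmetric] powr_realpow[symmetric] algebra_simps)
      then show ?thesis by (simp add: power_one_over)
    qed
    then show ?thesis
      using derivs[of 1 k] by (simp add: mult.assoc)
  qed
  moreover have "inj_on (\<lambda>i. 1 / (1 + d i)) A"
    using assms(2,3) by (auto simp: inj_on_def add_nonneg_eq_0_iff dest: add_pos_nonneg)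
  ultimately have "w i * (1 + d i) powr (K - 1) = 0"
    by (intro power_sums_eq_zero_imp_zero[OF assms(1) _ _ \<open>i \<in> A\<close>,
          where z = "\<lambda>i. w i * (1 + d i) powr (K - 1)" and y = "\<lambda>i. 1 / (1 + d i)"])
  moreover have "0 < 1 + d i" using assms(3)[OF \<open>i \<in> A\<close>] by simp
  ultimately show ?thesis by simp
qed

definition cov1_coeff :: "real \<Rightarrow> real" where
  "cov1_coeff K = (if K < 1 then Gamma (1 - K) / (K * (2 - K)) else - (Gamma (2 - K) / (K * (K - 1))))"

lemma cov1_eq:
  "cov1 H K s u = cov1_coeff K * (s powr (2*H*K) + u powr (2*H*K) - (s powr (2*H) + u powr (2*H)) powr K)"
  by (simp add: cov1_def cov1_coeff_def algebra_simps)

lemma cov1_coeff_nonzero: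
  assumes "K \<notin> \<nat>"
  shows "cov1_coeff K \<noteq> 0"
proof -
  have K: "K \<noteq> 0" "K \<noteq> 1" "K \<noteq> 2"
    using assms by auto
  have "Gamma (1 - K) \<noteq> 0" if "K < 1"
    using that by (auto simp: Gamma_eq_zero_iff)
  moreover have "Gamma (2 - K) \<noteq> 0"
  proof
    assume "Gamma (2 - K) = 0"
    then obtain n where "2 - K = - real n"
      by (auto simp: Gamma_eq_zero_iff elim!: nonpos_Ints_cases')
    then have "K = real (n + 2)" by simp
    with assms show False by (metis of_nat_in_Nats)
  qed
  ultimately show ?thesis using K by (auto simp: cov1_coeff_def)
qed

lemma sum_cov1_substitution:
  assumes "0 < H" "0 \<le> x"
  shows "(\<Sum>u\<in>T. a u * cov1 H K (x powr (1 / (2*H))) u)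
    = cov1_coeff K * ((\<Sum>u\<in>T. a u) * x powr K + (\<Sum>u\<in>T. a u * u powr (2*H*K))
                      - (\<Sum>u\<in>T. a u * (x + u powr (2*H)) powr K))"
proof -
  have "(x powr (1 / (2*H))) powr (2*H) = x" "(x powr (1 / (2*H))) powr (2*H*K) = x powr K"
    using assms by (simp_all add: powr_powr)
  then show ?thesis
    unfolding cov1_eq
    by (simp add: sum_distrib_left sum_distrib_right sum.distrib sum_subtractf algebra_simps)
qed

lemma inj_on_powr_nonneg: "p \<noteq> 0 \<Longrightarrow> inj_on (\<lambda>u::real. u powr p) {0..}"
  by (rule inj_onI) (metis atLeast_iff powr_powr powr_one right_inverse)

lemma lin_indep_sections_cov1:
  assumes "0 < H" "K \<notin> \<nat>"
  shows "lin_indep_sections (cov1 H K)"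
  unfolding lin_indep_sections_def
proof (intro allI impI ballI)
  fix T a t
  assume T: "finite T" "T \<subseteq> {0<..}" and zero: "\<forall>s\<ge>0. (\<Sum>u\<in>T. a u * cov1 H K s u) = 0"
    and "t \<in> T"
  then have "0 \<notin> T" "t \<noteq> 0" by auto
  define w where "w u = (if u = 0 then \<Sum>v\<in>T. a v else - a u)" for u
  have "(\<Sum>u\<in>insert 0 T. w u * (x + u powr (2*H)) powr K) = - (\<Sum>u\<in>T. a u * u powr (2*H*K))"
    if "0 < x" for x
  proof -
    have "(\<Sum>u\<in>insert 0 T. w u * (x + u powr (2*H)) powr K)
        = (\<Sum>u\<in>T. a u) * x powr K - (\<Sum>u\<in>T. a u * (x + u powr (2*H)) powr K)"
      using T(1) \<open>0 \<notin> T\<close> by (auto simp: w_def sum_negf[symmetric] intro!: sum.cong)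
    also have "\<dots> = - (\<Sum>u\<in>T. a u * u powr (2*H*K))"
      using sum_cov1_substitution[OF assms(1), where x = x and T = T and a = a and K = K] zero that cov1_coeff_nonzero[OF assms(2)]
      by simp
    finally show ?thesis .
  qed
  moreover have "inj_on (\<lambda>u. u powr (2*H)) (insert 0 T)"
    by (rule inj_on_subset[OF inj_on_powr_nonneg]) (use assms(1) T(2) in auto)
  ultimately have "w t = 0"
    using T(1) \<open>t \<in> T\<close> assms(2)
    by (intro sum_shifted_powr_const_imp_zero[where d = "\<lambda>u. u powr (2*H)" and A = "insert 0 T"]) auto
  with \<open>t \<noteq> 0\<close> show "a t = 0" by (simp add: w_def)
qed

lemmas lin_indep_sections_covs =
  lin_indep_sections_cov1 lin_indep_sections_cov2 lin_indep_sections_cov3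
  lin_indep_sections_cov4 lin_indep_sections_cov5 lin_indep_sections_cov6
  lin_indep_sections_cov7 lin_indep_sections_cov8 lin_indep_sections_cov9

section \<open>Covariance matrices\<close>

context
  fixes M :: "'a measure" and G :: "real \<Rightarrow> 'a \<Rightarrow> real" and R :: "real \<Rightarrow> real \<Rightarrow> real"
  assumes cov: "\<And>s t. s \<ge> 0 \<Longrightarrow> t \<ge> 0 \<Longrightarrow>
                integrable M (\<lambda>\<omega>. G s \<omega> * G t \<omega>) \<and>
                prob_space.expectation M (\<lambda>\<omega>. G s \<omega> * G t \<omega>) = R s t"
begin

lemma covariance_linear_combination:
  fixes n :: nat and ts a :: "nat \<Rightarrow> real"
  assumes "0 \<le> s" "\<And>j. j < n \<Longrightarrow> 0 \<le> ts j"
  shows "integrable M (\<lambda>\<omega>. G s \<omega> * (\<Sum>j<n. a j * G (ts j) \<omega>))"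
    and "(\<integral>\<omega>. G s \<omega> * (\<Sum>j<n. a j * G (ts j) \<omega>) \<partial>M) = (\<Sum>j<n. a j * R s (ts j))"
proof -
  have eq: "(\<lambda>\<omega>. G s \<omega> * (\<Sum>j<n. a j * G (ts j) \<omega>)) = (\<lambda>\<omega>. \<Sum>j<n. a j * (G s \<omega> * G (ts j) \<omega>))"
    by (simp add: sum_distrib_left mult_ac)
  have cov_j: "integrable M (\<lambda>\<omega>. G s \<omega> * G (ts j) \<omega>)"
    "(\<integral>\<omega>. G s \<omega> * G (ts j) \<omega> \<partial>M) = R s (ts j)" if "j < n" for j
    using cov[OF assms(1) assms(2)[OF that]] by simp_all
  show "integrable M (\<lambda>\<omega>. G s \<omega> * (\<Sum>j<n. a j * G (ts j) \<omega>))"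
    unfolding eq by (auto intro!: integrable_sum cov_j(1))
  show "(\<integral>\<omega>. G s \<omega> * (\<Sum>j<n. a j * G (ts j) \<omega>) \<partial>M) = (\<Sum>j<n. a j * R s (ts j))"
    unfolding eq using cov_j by (simp add: Bochner_Integration.integral_sum)
qed

lemma second_moment_linear_combination:
  fixes n :: nat and ts a :: "nat \<Rightarrow> real"
  assumes "\<And>j. j < n \<Longrightarrow> 0 \<le> ts j"
  shows "integrable M (\<lambda>\<omega>. (\<Sum>j<n. a j * G (ts j) \<omega>)\<^sup>2)"
    and "(\<integral>\<omega>. (\<Sum>j<n. a j * G (ts j) \<omega>)\<^sup>2 \<partial>M) = (\<Sum>i<n. \<Sum>j<n. a i * R (ts i) (ts j) * a j)"
proof -
  have eq: "(\<lambda>\<omega>. (\<Sum>j<n. a j * G (ts j) \<omega>)\<^sup>2)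
      = (\<lambda>\<omega>. \<Sum>i<n. a i * (G (ts i) \<omega> * (\<Sum>j<n. a j * G (ts j) \<omega>)))"
    by (simp add: power2_eq_square sum_distrib_right mult_ac)
  have cov_i: "integrable M (\<lambda>\<omega>. G (ts i) \<omega> * (\<Sum>j<n. a j * G (ts j) \<omega>))"
    "(\<integral>\<omega>. G (ts i) \<omega> * (\<Sum>j<n. a j * G (ts j) \<omega>) \<partial>M) = (\<Sum>j<n. a j * R (ts i) (ts j))"
    if "i < n" for i
    using covariance_linear_combination[of "ts i" n ts a] assms that by simp_all
  show "integrable M (\<lambda>\<omega>. (\<Sum>j<n. a j * G (ts j) \<omega>)\<^sup>2)"
    unfolding eq by (auto intro!: integrable_sum cov_i(1))
  have "(\<integral>\<omega>. (\<Sum>j<n. a j * G (ts j) \<omega>)\<^sup>2 \<partial>M)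
      = (\<Sum>i<n. \<integral>\<omega>. a i * (G (ts i) \<omega> * (\<Sum>j<n. a j * G (ts j) \<omega>)) \<partial>M)"
    unfolding eq by (rule Bochner_Integration.integral_sum) (auto intro: cov_i(1))
  also have "\<dots> = (\<Sum>i<n. a i * (\<Sum>j<n. a j * R (ts i) (ts j)))"
    by (rule sum.cong[OF refl]) (simp only: integral_mult_right_zero cov_i(2) lessThan_iff)
  also have "\<dots> = (\<Sum>i<n. \<Sum>j<n. a i * R (ts i) (ts j) * a j)"
    by (simp add: sum_distrib_left mult_ac)
  finally show "(\<integral>\<omega>. (\<Sum>j<n. a j * G (ts j) \<omega>)\<^sup>2 \<partial>M) = (\<Sum>i<n. \<Sum>j<n. a i * R (ts i) (ts j) * a j)" .
qed

lemma quad_form_zero_imp_kernel_combination_zero: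
  fixes n :: nat and ts a :: "nat \<Rightarrow> real"
  assumes "\<And>j. j < n \<Longrightarrow> 0 \<le> ts j" "(\<Sum>i<n. \<Sum>j<n. a i * R (ts i) (ts j) * a j) = 0" "0 \<le> s"
  shows "(\<Sum>j<n. a j * R s (ts j)) = 0"
proof -
  define X where "X \<omega> = (\<Sum>j<n. a j * G (ts j) \<omega>)" for \<omega>
  have "integrable M (\<lambda>\<omega>. (X \<omega>)\<^sup>2)" "(\<integral>\<omega>. (X \<omega>)\<^sup>2 \<partial>M) = 0"
    using second_moment_linear_combination[of n ts a] assms(1,2) by (simp_all add: X_def)
  then have "AE \<omega> in M. (X \<omega>)\<^sup>2 = 0"
    by (subst integral_nonneg_eq_0_iff_AE[symmetric]) auto
  then have "AE \<omega> in M. G s \<omega> * X \<omega> = 0"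
    by eventually_elim simp
  moreover have "integrable M (\<lambda>\<omega>. G s \<omega> * X \<omega>)"
    using covariance_linear_combination(1)[of s n ts a] assms(1,3) by (simp add: X_def)
  ultimately have "(\<integral>\<omega>. G s \<omega> * X \<omega> \<partial>M) = 0"
    by (simp add: integral_cong_AE[where g = "\<lambda>_. 0"])
  then show ?thesis
    using covariance_linear_combination(2)[of s n ts a] assms(1,3) by (simp add: X_def)
qed

lemma covariance_pos_def:
  fixes n :: nat and ts a :: "nat \<Rightarrow> real"
  assumes "lin_indep_sections R" "\<And>j. j < n \<Longrightarrow> 0 < ts j" "inj_on ts {..<n}" "\<exists>i<n. a i \<noteq> 0"
  shows "(\<Sum>i<n. \<Sum>j<n. a i * R (ts i) (ts j) * a j) > 0"
proof -
  have nonneg: "\<And>j. j < n \<Longrightarrow> 0 \<le> ts j" using assms(2) by (simp add: less_imp_le)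
  have "0 \<le> (\<Sum>i<n. \<Sum>j<n. a i * R (ts i) (ts j) * a j)"
    using second_moment_linear_combination(2)[of n ts a, symmetric] nonneg by simp
  moreover have "(\<Sum>i<n. \<Sum>j<n. a i * R (ts i) (ts j) * a j) \<noteq> 0"
  proof
    assume "(\<Sum>i<n. \<Sum>j<n. a i * R (ts i) (ts j) * a j) = 0"
    then have zero: "(\<Sum>j<n. a j * R s (ts j)) = 0" if "0 \<le> s" for s
      using quad_form_zero_imp_kernel_combination_zero[of n ts a s] nonneg that by blast
    define b where "b t = a (the_inv_into {..<n} ts t)" for t
    have "(\<Sum>t\<in>ts ` {..<n}. b t * R s t) = (\<Sum>j<n. a j * R s (ts j))" for s
      unfolding sum.reindex[OF assms(3)] b_def
      by (rule sum.cong) (simp_all add: the_inv_into_f_f[OF assms(3)])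
    then have "\<forall>s\<ge>0. (\<Sum>t\<in>ts ` {..<n}. b t * R s t) = 0"
      using zero by simp
    moreover have "finite (ts ` {..<n})" "ts ` {..<n} \<subseteq> {0<..}"
      using assms(2) by auto
    ultimately have "\<forall>t\<in>ts ` {..<n}. b t = 0"
      using assms(1) unfolding lin_indep_sections_def by blast
    then have "a i = 0" if "i < n" for i
      using that by (simp add: b_def the_inv_into_f_f[OF assms(3)])
    with assms(4) show False by blast
  qed
  ultimately show ?thesis by simp
qed

end

section \<open>Growth of the variance\<close>

definition subquadratic_diagonal :: "(real \<Rightarrow> real \<Rightarrow> real) \<Rightarrow> bool" where
  "subquadratic_diagonal R \<longleftrightarrow> (\<exists>c \<beta>. c > 0 \<and> \<beta> < 2 \<and> (\<forall>t\<ge>0. R t t \<le> c * t powr \<beta>))"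

lemma subquadratic_diagonal_if_self_similar:
  assumes "\<beta> < 2" "\<And>t. 0 \<le> t \<Longrightarrow> R t t = R 1 1 * t powr \<beta>"
  shows "subquadratic_diagonal R"
proof -
  have "R t t \<le> (\<bar>R 1 1\<bar> + 1) * t powr \<beta>" if "0 \<le> t" for t
  proof -
    have "R t t \<le> \<bar>R 1 1\<bar> * t powr \<beta>"
      using assms(2)[OF that] by (simp add: mult_right_mono)
    also have "\<dots> \<le> (\<bar>R 1 1\<bar> + 1) * t powr \<beta>"
      by (simp add: mult_right_mono)
    finally show ?thesis .
  qed
  with assms(1) show ?thesis
    unfolding subquadratic_diagonal_def by (intro exI[of _ "\<bar>R 1 1\<bar> + 1"] exI[of _ \<beta>]) auto
qed

lemma subquadratic_diagonal_cov1: "H * K < 1 \<Longrightarrow> subquadratic_diagonal (cov1 H K)"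
  by (rule subquadratic_diagonal_if_self_similar[of "2*H*K"])
     (auto simp: cov1_def powr_mult powr_powr algebra_simps diff_divide_distrib)

lemma subquadratic_diagonal_cov2: "H < 1 \<Longrightarrow> subquadratic_diagonal (cov2 H)"
  by (rule subquadratic_diagonal_if_self_similar[of "2*H"]) (auto simp: cov2_def)

lemma subquadratic_diagonal_cov3: "H < 1 \<Longrightarrow> subquadratic_diagonal (cov3 H)"
  by (rule subquadratic_diagonal_if_self_similar[of "2*H"]) (auto simp: cov3_def powr_mult)

lemma subquadratic_diagonal_cov4: "H < 1 \<Longrightarrow> subquadratic_diagonal (cov4 H)"
  by (rule subquadratic_diagonal_if_self_similar[of "2*H"])
     (auto simp: cov4_def powr_mult algebra_simps)

lemma subquadratic_diagonal_cov5: "H < 1 \<Longrightarrow> subquadratic_diagonal (cov5 H)"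
  by (rule subquadratic_diagonal_if_self_similar[of "2*H"])
     (auto simp: cov5_def powr_mult algebra_simps)

lemma subquadratic_diagonal_cov6: "H < 1 \<Longrightarrow> subquadratic_diagonal (cov6 H)"
  by (rule subquadratic_diagonal_if_self_similar[of "2*H"]) (auto simp: cov6_def)

lemma subquadratic_diagonal_cov7: "H < 1 \<Longrightarrow> subquadratic_diagonal (cov7 H K)"
  by (rule subquadratic_diagonal_if_self_similar[of "2*H"])
     (auto simp: cov7_def powr_mult algebra_simps)

lemma subquadratic_diagonal_cov8: "H * K < 1 \<Longrightarrow> subquadratic_diagonal (cov8 H K)"
  by (rule subquadratic_diagonal_if_self_similar[of "2*H*K"])
     (auto simp: cov8_def powr_mult powr_powr)

lemma subquadratic_diagonal_cov9: "H * K < 1 \<Longrightarrow> subquadratic_diagonal (cov9 H K)"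
  by (rule subquadratic_diagonal_if_self_similar[of "2*H*K"])
     (auto simp: cov9_def powr_mult powr_powr algebra_simps)

lemmas subquadratic_diagonal_covs =
  subquadratic_diagonal_cov1 subquadratic_diagonal_cov2 subquadratic_diagonal_cov3
  subquadratic_diagonal_cov4 subquadratic_diagonal_cov5 subquadratic_diagonal_cov6
  subquadratic_diagonal_cov7 subquadratic_diagonal_cov8 subquadratic_diagonal_cov9

theorem theorem1p1:
  fixes M :: "'a measure" and G :: "real \<Rightarrow> 'a \<Rightarrow> real"
    and R :: "real \<Rightarrow> real \<Rightarrow> real" and H K :: real
  assumes cases:
    "(R = cov1 H K \<and> ((0 < K \<and> K < 1) \<or> (1 < K \<and> K < 2)) \<and> 0 < H \<and> H < 1
        \<and> 0 < H * K \<and> H * K < 1)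
     \<or> (R = cov2 H \<and> 0 < H \<and> H < 1)
     \<or> (R = cov3 H \<and> 0 < H \<and> H < 1)
     \<or> (R = cov4 H \<and> 0 < H \<and> H < 1)
     \<or> (R = cov5 H \<and> 0 < H \<and> H < 1/2)
     \<or> (R = cov6 H \<and> 0 < H \<and> H < 1/2)
     \<or> (R = cov7 H K \<and> 0 < H \<and> H < 1/2 \<and> 0 < K \<and> K < 1)
     \<or> (R = cov8 H K \<and> 0 < H \<and> H < 1 \<and> ((0 < K \<and> K < 1) \<or> (1 < K \<and> K < 2))
        \<and> 0 < H * K \<and> H * K < 1)
     \<or> (R = cov9 H K \<and> ((0 < H \<and> H < 1 \<and> 1 < K \<and> K < 2 \<and> 0 < H * K \<and> H * K < 1)
                         \<or> (0 < H \<and> H < 1/2 \<and> 0 < K \<and> K < 1)))"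
    and prob: "prob_space M"
    and gauss: "gaussian_process M G"
    and centered: "\<And>t. t \<ge> 0 \<Longrightarrow> prob_space.expectation M (G t) = 0"
    and cov: "\<And>s t. s \<ge> 0 \<Longrightarrow> t \<ge> 0 \<Longrightarrow>
                integrable M (\<lambda>\<omega>. G s \<omega> * G t \<omega>) \<and>
                prob_space.expectation M (\<lambda>\<omega>. G s \<omega> * G t \<omega>) = R s t"
  shows "(\<exists>c \<beta>. c > 0 \<and> \<beta> < 2 \<and>
            (\<forall>t\<ge>0. prob_space.expectation M (\<lambda>\<omega>. (G t \<omega>)\<^sup>2) \<le> c * t powr \<beta>))
       \<and> (\<forall>(n::nat) (ts::nat \<Rightarrow> real). n \<ge> 1 \<longrightarrow> 0 < ts 0 \<longrightarrow>
            (\<forall>i. Suc i < n \<longrightarrow> ts i < ts (Suc i)) \<longrightarrow>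
            (\<forall>a::nat \<Rightarrow> real. (\<exists>i<n. a i \<noteq> 0) \<longrightarrow>
               (\<Sum>i<n. \<Sum>j<n. a i * R (ts i) (ts j) * a j) > 0))"
proof -
  have "H * K < 1" if "0 < H" "H < 1/2" "K < 1"
  proof -
    have "H * K < H * 1" using that by (intro mult_strict_left_mono)
    with that show ?thesis by linarith
  qed
  with not_in_Nats_between[of 0 K] not_in_Nats_between[of 1 K]
  have R: "subquadratic_diagonal R \<and> lin_indep_sections R"
    using cases
    by (elim disjE conjE) (simp_all add: subquadratic_diagonal_covs lin_indep_sections_covs)
  have "prob_space.expectation M (\<lambda>\<omega>. (G t \<omega>)\<^sup>2) = R t t" if "t \<ge> 0" for t
    using cov[OF that that] by (simp add: power2_eq_square)
  with R have variance: "\<exists>c \<beta>. c > 0 \<and> \<beta> < 2 \<and>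
      (\<forall>t\<ge>0. prob_space.expectation M (\<lambda>\<omega>. (G t \<omega>)\<^sup>2) \<le> c * t powr \<beta>)"
    unfolding subquadratic_diagonal_def by simp
  have "(\<Sum>i<n. \<Sum>j<n. a i * R (ts i) (ts j) * a j) > 0"
    if "0 < ts 0" "\<forall>i. Suc i < n \<longrightarrow> ts i < ts (Suc i)" "\<exists>i<n. a i \<noteq> 0"
    for n :: nat and ts a :: "nat \<Rightarrow> real"
  proof (rule covariance_pos_def[OF cov])
    have mono: "strict_mono_on {..<n} ts"
      using that(2) by (intro strict_mono_on_lessThanI) simp
    then show "inj_on ts {..<n}"
      by (rule strict_mono_on_imp_inj_on)
    show "0 < ts j" if "j < n" for j
      using strict_mono_on_leD[OF mono, of 0 j] \<open>0 < ts 0\<close> that by simp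
  qed (use R that in auto)
  with variance show ?thesis by blast
qed

end
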